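(* There is a function $C(t,\epsilon)$ such that the following holds for every positive integer $t$ and every $\epsilon\in(0,1)$: let $G$ be a connected balanced bipartite graph with parts $X,Y$ each of order $n$, with $\delta(G)\geq C(t,\epsilon)$ and with no induced $S_{t,t}$. Then \[|U_X(\epsilon)|,\ |U_Y(\epsilon)|\leq \frac{C(t,\epsilon)}{\delta(G)}\,n.\]
   Context: For positive integers $a,b$, the biclaw $S_{a,b}$ is the graph with vertex set $\{x,x_1,\dots,x_a,y,y_1,\dots,y_b\}$ and edges $xy$, $xy_1,\dots,xy_b$, $yx_1,\dots,yx_a$; "no induced $S_{t,t}$" means no induced subgraph isomorphic to $S_{t,t}$. For a bipartite graph with parts $X,Y$, $\Delta_X=\max_{x\in X} d(x)$, $\Delta_Y=\max_{y\in Y}d(y)$, and for $\epsilon\in(0,1)$, $U_X(\epsilon)=\{x\in X: d(x)\leq (1-\epsilon)\Delta_X\}$, $U_Y(\epsilon)=\{y\in Y: d(y)\leq(1-\epsilon)\Delta_Y\}$. $\delta(G)$ is the minimum degree. *)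

theory Defs
  imports Complex_Main
begin

definition graph :: "'a set \<Rightarrow> ('a \<Rightarrow> 'a \<Rightarrow> bool) \<Rightarrow> bool" where
  "graph V E \<longleftrightarrow> finite V \<and> (\<forall>u v. E u v \<longrightarrow> u \<in> V \<and> v \<in> V)
     \<and> (\<forall>u v. E u v \<longrightarrow> E v u) \<and> (\<forall>v. \<not> E v v)"

definition degree :: "'a set \<Rightarrow> ('a \<Rightarrow> 'a \<Rightarrow> bool) \<Rightarrow> 'a \<Rightarrow> nat" where
  "degree V E v = card {u \<in> V. E v u}"

definition min_degree :: "'a set \<Rightarrow> ('a \<Rightarrow> 'a \<Rightarrow> bool) \<Rightarrow> nat" where
  "min_degree V E = Min (degree V E ` V)"

definition max_degree_on :: "'a set \<Rightarrow> ('a \<Rightarrow> 'a \<Rightarrow> bool) \<Rightarrow> 'a set \<Rightarrow> nat" where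
  "max_degree_on V E X = Max (degree V E ` X)"

definition connected_graph :: "'a set \<Rightarrow> ('a \<Rightarrow> 'a \<Rightarrow> bool) \<Rightarrow> bool" where
  "connected_graph V E \<longleftrightarrow> V \<noteq> {} \<and>
     (\<forall>u\<in>V. \<forall>v\<in>V. (u, v) \<in> (rtrancl {(a, b). E a b}))"

definition bipartite_with :: "'a set \<Rightarrow> ('a \<Rightarrow> 'a \<Rightarrow> bool) \<Rightarrow> 'a set \<Rightarrow> 'a set \<Rightarrow> bool" where
  "bipartite_with V E X Y \<longleftrightarrow> X \<inter> Y = {} \<and> X \<union> Y = V
     \<and> (\<forall>u v. E u v \<longrightarrow> (u \<in> X \<and> v \<in> Y) \<or> (u \<in> Y \<and> v \<in> X))"

text \<open>Low-degree sets U_X(eps) = {x in X. d(x) <= (1 - eps) Delta_X}.\<close>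
definition low_set :: "'a set \<Rightarrow> ('a \<Rightarrow> 'a \<Rightarrow> bool) \<Rightarrow> 'a set \<Rightarrow> real \<Rightarrow> 'a set" where
  "low_set V E X eps = {x \<in> X. real (degree V E x) \<le> (1 - eps) * real (max_degree_on V E X)}"

text \<open>Vertices of the biclaw S_{a,b}: x, y, x_i (i<a), y_j (j<b), coded as
  BX, BY, BXi i, BYj j (indices 0-based).\<close>
datatype biclaw_vertex = BX | BY | BXi nat | BYj nat

definition biclaw_verts :: "nat \<Rightarrow> nat \<Rightarrow> biclaw_vertex set" where
  "biclaw_verts a b = {BX, BY} \<union> BXi ` {..<a} \<union> BYj ` {..<b}"

fun biclaw_edge0 :: "biclaw_vertex \<Rightarrow> biclaw_vertex \<Rightarrow> bool" where
  "biclaw_edge0 BX BY = True"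
| "biclaw_edge0 BX (BYj _) = True"
| "biclaw_edge0 BY (BXi _) = True"
| "biclaw_edge0 _ _ = False"

definition biclaw_edge :: "biclaw_vertex \<Rightarrow> biclaw_vertex \<Rightarrow> bool" where
  "biclaw_edge u v \<longleftrightarrow> biclaw_edge0 u v \<or> biclaw_edge0 v u"

definition has_induced_biclaw :: "'a set \<Rightarrow> ('a \<Rightarrow> 'a \<Rightarrow> bool) \<Rightarrow> nat \<Rightarrow> nat \<Rightarrow> bool" where
  "has_induced_biclaw V E a b \<longleftrightarrow>
     (\<exists>f. inj_on f (biclaw_verts a b) \<and> f ` biclaw_verts a b \<subseteq> V \<and>
          (\<forall>u\<in>biclaw_verts a b. \<forall>v\<in>biclaw_verts a b. E (f u) (f v) \<longleftrightarrow> biclaw_edge u v))"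

end

(* Without an induced S_{t,t}, for every edge uv of the bipartite graph any t neighbours of v
   other than u and any t neighbours of u other than v span an edge.  A Kovari-Sos-Turan type
   double count over t-sets then shows that all but K = (t - 1) (4t/eps)^t neighbours w of v
   share more than a (1 - eps/4)-fraction of the neighbourhood of u.

   Fix x0 of maximum degree Delta in X; call x in X good if it shares more than
   (1 - eps/4) Delta neighbours with x0, and y in Y good if it has a good neighbour.  A good y has
   at most 3K non-good neighbours, and from this one shows that a vertex of X with one good
   neighbour has only good neighbours, so by connectivity every y in Y is good.  Finally a
   low-degree neighbour x of y shares few neighbours with a good neighbour of y, so each y has at
   most K neighbours in U_X(eps); counting the edges between U_X(eps) and Y gives
   |U_X(eps)| delta <= K n. *)

theory Submission
  imports Defs
begin

definition nbhd :: "'a set \<Rightarrow> ('a \<Rightarrow> 'a \<Rightarrow> bool) \<Rightarrow> 'a \<Rightarrow> 'a set" where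
  "nbhd V E v = {u \<in> V. E v u}"

lemma degree_eq_card_nbhd: "degree V E v = card (nbhd V E v)"
  by (simp add: degree_def nbhd_def)

lemma graph_nbhd_iff: "graph V E \<Longrightarrow> w \<in> nbhd V E v \<longleftrightarrow> E v w"
  by (auto simp: graph_def nbhd_def)

lemma graph_finite_nbhd: "graph V E \<Longrightarrow> finite (nbhd V E v)"
  by (simp add: graph_def nbhd_def)

lemma bipartite_nbhd_independent:
  assumes "bipartite_with V E X Y" "p \<in> nbhd V E w" "q \<in> nbhd V E w"
  shows "\<not> E p q"
  using assms by (auto simp: bipartite_with_def nbhd_def)

lemma mem_biclaw_verts [simp]:
  "BX \<in> biclaw_verts a b" "BY \<in> biclaw_verts a b"
  "BXi i \<in> biclaw_verts a b \<longleftrightarrow> i < a" "BYj j \<in> biclaw_verts a b \<longleftrightarrow> j < b"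
  by (auto simp: biclaw_verts_def)

lemma has_induced_biclawI:
  assumes G: "graph V E" and uv: "E u v"
    and A: "A \<subseteq> nbhd V E v - {u}" "card A = a"
    and B: "B \<subseteq> nbhd V E u - {v}" "card B = b"
    and indep_u: "\<And>p q. p \<in> nbhd V E u \<Longrightarrow> q \<in> nbhd V E u \<Longrightarrow> \<not> E p q"
    and indep_v: "\<And>p q. p \<in> nbhd V E v \<Longrightarrow> q \<in> nbhd V E v \<Longrightarrow> \<not> E p q"
    and AB: "\<And>p q. p \<in> A \<Longrightarrow> q \<in> B \<Longrightarrow> \<not> E p q"
  shows "has_induced_biclaw V E a b"
proof -
  have N: "\<And>v w. w \<in> nbhd V E v \<longleftrightarrow> E v w" using G by (rule graph_nbhd_iff)
  have sym: "\<And>p q. E p q \<Longrightarrow> E q p" using G by (simp add: graph_def)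
  have "finite A" "finite B"
    using A B G by (auto intro: finite_subset graph_finite_nbhd)
  then obtain ga gb where ga: "bij_betw ga {..<a} A" and gb: "bij_betw gb {..<b} B"
    using A(2) B(2) by (metis atLeast0LessThan ex_bij_betw_nat_finite)
  have gaA: "ga i \<in> A" if "i < a" for i using ga that by (auto simp: bij_betw_def)
  have gbB: "gb j \<in> B" if "j < b" for j using gb that by (auto simp: bij_betw_def)
  have gaN: "ga i \<in> nbhd V E v" if "i < a" for i using gaA A(1) that by blast
  have gbN: "gb j \<in> nbhd V E u" if "j < b" for j using gbB B(1) that by blast
  have uv_ne: "u \<noteq> v" using uv G by (auto simp: graph_def)
  have vu: "E v u" using sym uv .
  have sides_disj: "p \<noteq> q" if "p \<in> nbhd V E v" "q \<in> nbhd V E u" for p q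
    using that indep_u N uv sym by metis
  have uN: "u \<in> nbhd V E v" and vN: "v \<in> nbhd V E u" using N uv vu by auto
  have irr: "\<not> E p p" for p using G by (simp add: graph_def)
  define f where "f z = (case z of BX \<Rightarrow> u | BY \<Rightarrow> v | BXi i \<Rightarrow> ga i | BYj j \<Rightarrow> gb j)" for z
  show ?thesis
    unfolding has_induced_biclaw_def
  proof (intro exI[of _ f] conjI ballI)
    show "inj_on f (biclaw_verts a b)"
    proof (rule inj_onI)
      fix p q assume p: "p \<in> biclaw_verts a b" and q: "q \<in> biclaw_verts a b" and "f p = f q"
      have ne_a: "ga i \<noteq> u" "ga i \<noteq> v" if "i < a" for i
        using A(1) gaA sides_disj[OF gaN vN] that by auto
      have ne_b: "gb j \<noteq> u" "gb j \<noteq> v" if "j < b" for j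
        using B(1) gbB sides_disj[OF uN gbN] that by auto
      have ne_ab: "ga i \<noteq> gb j" if "i < a" "j < b" for i j
        using sides_disj[OF gaN gbN] that .
      from p q \<open>f p = f q\<close> show "p = q"
        by (cases p; cases q)
          (simp_all add: f_def uv_ne uv_ne[THEN not_sym] ne_a ne_a[THEN not_sym] ne_b ne_b[THEN not_sym]
            ne_ab ne_ab[THEN not_sym] inj_on_eq_iff[OF bij_betw_imp_inj_on[OF ga]]
            inj_on_eq_iff[OF bij_betw_imp_inj_on[OF gb]])
    qed
    show "f ` biclaw_verts a b \<subseteq> V"
      using uN vN gaN gbN by (auto simp: biclaw_verts_def f_def nbhd_def)
    fix p q assume p: "p \<in> biclaw_verts a b" and q: "q \<in> biclaw_verts a b"
    have E_a: "E v (ga i)" "E (ga i) v" "\<not> E u (ga i)" "\<not> E (ga i) u" if "i < a" for i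
      using N gaN[OF that] sym indep_v[OF uN] indep_v[OF _ uN] by blast+
    have E_b: "E u (gb j)" "E (gb j) u" "\<not> E v (gb j)" "\<not> E (gb j) v" if "j < b" for j
      using N gbN[OF that] sym indep_u[OF vN] indep_u[OF _ vN] by blast+
    have E_aa: "\<not> E (ga i) (ga i')" if "i < a" "i' < a" for i i'
      using indep_v gaN that by blast
    have E_bb: "\<not> E (gb j) (gb j')" if "j < b" "j' < b" for j j'
      using indep_u gbN that by blast
    have E_ab: "\<not> E (ga i) (gb j)" "\<not> E (gb j) (ga i)" if "i < a" "j < b" for i j
      using AB gaA gbB sym that by blast+
    from p q show "E (f p) (f q) = biclaw_edge p q"
      by (cases p; cases q) (simp_all add: f_def biclaw_edge_def uv vu irr E_a E_b E_aa E_bb E_ab)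
  qed
qed

definition linked_nbhds :: "'a set \<Rightarrow> ('a \<Rightarrow> 'a \<Rightarrow> bool) \<Rightarrow> nat \<Rightarrow> bool" where
  "linked_nbhds V E t \<longleftrightarrow>
     (\<forall>u v A B. E u v \<longrightarrow> A \<subseteq> nbhd V E v - {u} \<longrightarrow> B \<subseteq> nbhd V E u - {v} \<longrightarrow>
        card A = t \<longrightarrow> card B = t \<longrightarrow> (\<exists>a\<in>A. \<exists>b\<in>B. E a b))"

lemma linked_nbhds_if_no_induced_biclaw:
  assumes "graph V E" "bipartite_with V E X Y" "\<not> has_induced_biclaw V E t t"
  shows "linked_nbhds V E t"
  using assms has_induced_biclawI[OF assms(1)] bipartite_nbhd_independent[OF assms(2)]
  unfolding linked_nbhds_def by metis

lemma double_counting_card_le: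
  fixes p q :: real
  assumes "finite A" "finite B"
    and "\<And>a. a \<in> A \<Longrightarrow> p \<le> card {b \<in> B. R a b}"
    and "\<And>b. b \<in> B \<Longrightarrow> card {a \<in> A. R a b} \<le> q"
  shows "card A * p \<le> card B * q"
proof -
  have "card A * p = (\<Sum>a\<in>A. p)" by simp
  also have "\<dots> \<le> (\<Sum>a\<in>A. real (card {b \<in> B. R a b}))" using assms(3) by (rule sum_mono)
  also have "\<dots> = (\<Sum>a\<in>A. \<Sum>b\<in>{b \<in> B. R a b}. 1)" by simp
  also have "\<dots> = (\<Sum>b\<in>B. \<Sum>a\<in>{a \<in> A. R a b}. 1)" using assms(1,2) by (rule sum.swap_restrict)
  also have "\<dots> = (\<Sum>b\<in>B. real (card {a \<in> A. R a b}))" by simp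
  also have "\<dots> \<le> (\<Sum>b\<in>B. q)" using assms(4) by (rule sum_mono)
  also have "\<dots> = card B * q" by simp
  finally show ?thesis .
qed

lemma exists_in_diff_if_card_less:
  assumes "finite S" "card S < card A"
  obtains a where "a \<in> A - S"
proof -
  have "\<not> A \<subseteq> S" using assms card_mono not_le by metis
  then show ?thesis using that by blast
qed

definition exceptional_bound :: "nat \<Rightarrow> real \<Rightarrow> real" where
  "exceptional_bound t \<eta> = (real t - 1) * (real t / \<eta>) ^ t"

lemma exceptional_bound_nonneg: "0 < t \<Longrightarrow> 0 < \<eta> \<Longrightarrow> 0 \<le> exceptional_bound t \<eta>"
  by (simp add: exceptional_bound_def)

lemma card_far_nbrs_le:
  fixes \<eta> :: real
  assumes G: "graph V E" and L: "linked_nbhds V E t" and uv: "E u v"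
    and \<eta>: "0 < \<eta>" "\<eta> \<le> 1" and t: "0 < t"
    and large: "real t \<le> \<eta> * card (nbhd V E u - {v})"
  shows "card {w \<in> nbhd V E v - {u}.
            \<eta> * card (nbhd V E u - {v}) \<le> card (nbhd V E u - {v} - nbhd V E w)}
         \<le> exceptional_bound t \<eta>"
    (is "real (card ?W) \<le> _")
proof -
  define B where "B = nbhd V E u - {v}"
  define b where "b = card B"
  define Ts where "Ts = {T. T \<subseteq> B \<and> card T = t}"
  have fin: "finite B" "finite ?W" using graph_finite_nbhd[OF G] by (auto simp: B_def)
  have tb: "t \<le> b" using large \<eta> unfolding b_def B_def
    by (smt (verit) mult_left_le_one_le of_nat_0_le_iff of_nat_le_iff)
  have "card ?W * (\<eta> * b / t) ^ t \<le> card Ts * (real t - 1)"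
  proof (rule double_counting_card_le[where R = "\<lambda>w T. T \<subseteq> B - nbhd V E w"])
    show "finite Ts" using fin(1) by (simp add: Ts_def)
    fix w assume w: "w \<in> ?W"
    then have "\<eta> * b / t \<le> card (B - nbhd V E w) / t" and "t \<le> card (B - nbhd V E w)"
      using large by (auto simp: B_def b_def divide_right_mono)
    then have "(\<eta> * b / t) ^ t \<le> card (B - nbhd V E w) choose t"
      using \<eta> t by (meson binomial_ge_n_over_k_pow_k order_trans power_mono zero_le_divide_iff
          mult_nonneg_nonneg of_nat_0_le_iff less_imp_le)
    also have "\<dots> = card {T \<in> Ts. T \<subseteq> B - nbhd V E w}"
    proof -
      have "{T \<in> Ts. T \<subseteq> B - nbhd V E w} = {T. T \<subseteq> B - nbhd V E w \<and> card T = t}"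
        by (auto simp: Ts_def)
      then show ?thesis using n_subsets[of "B - nbhd V E w" t] fin(1) by simp
    qed
    finally show "(\<eta> * b / t) ^ t \<le> card {T \<in> Ts. T \<subseteq> B - nbhd V E w}" by simp
  next
    fix T assume T: "T \<in> Ts"
    have "card {w \<in> ?W. T \<subseteq> B - nbhd V E w} < t"
    proof (rule ccontr)
      assume "\<not> ?thesis"
      then obtain A where A: "A \<subseteq> {w \<in> ?W. T \<subseteq> B - nbhd V E w}" "card A = t"
        by (meson not_less obtain_subset_with_card_n)
      moreover have "A \<subseteq> nbhd V E v - {u}" using A(1) by auto
      moreover have "T \<subseteq> nbhd V E u - {v}" "card T = t" using T by (auto simp: Ts_def B_def)
      ultimately obtain a c where "a \<in> A" "c \<in> T" "E a c"
        using L uv unfolding linked_nbhds_def by blast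
      moreover from calculation have "c \<notin> nbhd V E a" using A by blast
      ultimately show False using graph_nbhd_iff[OF G] by blast
    qed
    then show "card {w \<in> ?W. T \<subseteq> B - nbhd V E w} \<le> real t - 1" by linarith
  qed fact
  also have "\<dots> = (b choose t) * (real t - 1)" using n_subsets[OF fin(1)] by (simp add: Ts_def b_def)
  also have "\<dots> \<le> b ^ t * (real t - 1)"
    using binomial_le_pow[OF tb] t by (intro mult_right_mono) (simp_all flip: of_nat_power)
  also have "\<dots> = exceptional_bound t \<eta> * (\<eta> * b / t) ^ t"
    using \<eta> t by (simp add: exceptional_bound_def power_mult_distrib power_divide field_simps)
  finally show ?thesis using \<eta> t tb by (simp add: B_def b_def)
qed

lemma few_nbrs_with_low_codegree:
  fixes \<eta> :: real
  assumes G: "graph V E" and L: "linked_nbhds V E t" and uv: "E u v"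
    and \<eta>: "0 < \<eta>" "\<eta> \<le> 1" and t: "0 < t"
    and large: "real t \<le> \<eta> * (degree V E u - 1)"
  obtains S where "S \<subseteq> nbhd V E v" "card S \<le> exceptional_bound t \<eta>"
    "\<And>w. w \<in> nbhd V E v - S \<Longrightarrow> (1 - \<eta>) * degree V E u < card (nbhd V E u \<inter> nbhd V E w)"
proof
  let ?N = "nbhd V E" and ?B = "nbhd V E u - {v}"
  define S where "S = {w \<in> ?N v - {u}. \<eta> * card ?B \<le> card (?B - ?N w)}"
  have fin: "finite (?N x)" for x using G by (rule graph_finite_nbhd)
  have vu: "v \<in> ?N u" "u \<in> ?N v" using uv G by (auto simp: graph_nbhd_iff graph_def)
  have deg_pos: "0 < card (?N u)" using vu fin card_gt_0_iff by blast
  then have card_B: "card ?B = real (degree V E u) - 1"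
    using vu fin by (simp add: degree_eq_card_nbhd of_nat_diff Suc_le_eq)
  show "S \<subseteq> ?N v" by (auto simp: S_def)
  show "card S \<le> exceptional_bound t \<eta>"
    unfolding S_def using card_far_nbrs_le[OF G L uv \<eta> t] large card_B by simp
  fix w assume w: "w \<in> ?N v - S"
  show "(1 - \<eta>) * degree V E u < card (?N u \<inter> ?N w)"
  proof (cases "w = u")
    case True
    then show ?thesis using deg_pos \<eta> by (simp add: degree_eq_card_nbhd algebra_simps)
  next
    case False
    let ?a = "real (card (?B \<inter> ?N w))" and ?b = "real (card (?B - ?N w))"
    have split: "card ?B = card (?B \<inter> ?N w) + card (?B - ?N w)"
      using fin by (simp add: card_Int_Diff)
    then have far: "?b < \<eta> * (?a + ?b)" using w False by (auto simp: S_def)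
    have "v \<in> ?N w" using w G by (auto simp: graph_nbhd_iff graph_def)
    then have "insert v (?B \<inter> ?N w) \<subseteq> ?N u \<inter> ?N w" using vu by blast
    then have codeg: "?a + 1 \<le> card (?N u \<inter> ?N w)"
      using fin card_mono[of "?N u \<inter> ?N w" "insert v (?B \<inter> ?N w)"] by simp
    have deg: "real (degree V E u) = 1 + ?a + ?b" using card_B split by simp
    have "(1 - \<eta>) * (1 + ?a + ?b) = 1 - \<eta> + ?a + ?b - \<eta> * (?a + ?b)"
      by (simp add: algebra_simps)
    then show ?thesis unfolding deg using far codeg \<eta> by linarith
  qed
qed

lemma connected_graph_closed_set:
  assumes "connected_graph V E" "a \<in> V" "a \<in> P" "\<And>p q. p \<in> P \<Longrightarrow> E p q \<Longrightarrow> q \<in> P"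
  shows "V \<subseteq> P"
proof
  fix b assume "b \<in> V"
  then have "(a, b) \<in> {(p, q). E p q}\<^sup>*" using assms(1,2) by (simp add: connected_graph_def)
  then show "b \<in> P" by induction (use assms(3,4) in auto)
qed

lemma bipartite_with_swap: "bipartite_with V E X Y \<Longrightarrow> bipartite_with V E Y X"
  by (auto simp: bipartite_with_def)

definition min_degree_threshold :: "nat \<Rightarrow> real \<Rightarrow> real" where
  "min_degree_threshold t \<epsilon> = 4 * exceptional_bound t (\<epsilon> / 4) + 4 * real t / \<epsilon> + 1"

lemma exceptional_bound_less_min_degree_threshold:
  assumes "0 < t" "0 < \<epsilon>"
  shows "exceptional_bound t (\<epsilon> / 4) < min_degree_threshold t \<epsilon>"
proof -
  have "0 \<le> exceptional_bound t (\<epsilon> / 4)" "0 \<le> 4 * real t / \<epsilon>"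
    using assms exceptional_bound_nonneg by simp_all
  then show ?thesis by (simp add: min_degree_threshold_def)
qed

locale biclaw_free_bipartite =
  fixes V :: "'a set" and E :: "'a \<Rightarrow> 'a \<Rightarrow> bool" and X Y :: "'a set"
    and t :: nat and \<epsilon> :: real and x0 :: 'a
  assumes graph: "graph V E"
    and connected: "connected_graph V E"
    and bipartite: "bipartite_with V E X Y"
    and linked: "linked_nbhds V E t"
    and t_pos: "0 < t"
    and eps: "0 < \<epsilon>" "\<epsilon> < 1"
    and min_degree_large: "min_degree_threshold t \<epsilon> \<le> min_degree V E"
    and x0: "x0 \<in> X"
    and x0_max: "\<And>x. x \<in> X \<Longrightarrow> degree V E x \<le> degree V E x0"
begin

abbreviation "N \<equiv> nbhd V E"
abbreviation "\<eta> \<equiv> \<epsilon> / 4"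
abbreviation "K \<equiv> exceptional_bound t \<eta>"
abbreviation "\<Delta> \<equiv> degree V E x0"

lemma nbhd_iff: "w \<in> N v \<longleftrightarrow> E v w"
  using graph by (rule graph_nbhd_iff)

lemma edge_sym: "E u v \<Longrightarrow> E v u"
  using graph by (simp add: graph_def)

lemma finite_nbhd: "finite (N v)"
  using graph by (rule graph_finite_nbhd)

lemma finite_parts: "finite X" "finite Y"
  using graph bipartite by (auto simp: graph_def bipartite_with_def intro: finite_subset)

lemma parts_subset: "X \<subseteq> V" "Y \<subseteq> V"
  using bipartite by (auto simp: bipartite_with_def)

lemma nbhd_X: "x \<in> X \<Longrightarrow> N x \<subseteq> Y" and nbhd_Y: "y \<in> Y \<Longrightarrow> N y \<subseteq> X"
  using bipartite by (auto simp: bipartite_with_def nbhd_def)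

lemma K_nonneg: "0 \<le> K"
  using t_pos eps by (simp add: exceptional_bound_nonneg)

lemma degree_large:
  assumes "v \<in> V"
  shows "4 * K + 4 * real t / \<epsilon> + 1 \<le> degree V E v"
proof -
  have "min_degree V E \<le> degree V E v"
    using assms graph by (simp add: min_degree_def graph_def)
  then show ?thesis using min_degree_large by (simp add: min_degree_threshold_def)
qed

lemma degree_gt_4K: "v \<in> V \<Longrightarrow> 4 * K < degree V E v"
  using degree_large[of v] eps t_pos by (smt (verit) divide_nonneg_pos of_nat_0_le_iff)

lemma exceptional_nbrs:
  assumes "E u v"
  obtains S where "S \<subseteq> N v" "card S \<le> K"
    "\<And>w. w \<in> N v - S \<Longrightarrow> (1 - \<eta>) * degree V E u < card (N u \<inter> N w)"
proof (rule few_nbrs_with_low_codegree[OF graph linked assms _ _ t_pos])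
  have "u \<in> V" using assms graph by (simp add: graph_def)
  then have "4 * real t / \<epsilon> \<le> degree V E u - 1" using degree_large[of u] K_nonneg by linarith
  then show "real t \<le> \<eta> * (degree V E u - 1)"
    using eps by (simp add: field_simps)
qed (use eps in auto)

lemma Delta_pos: "0 < \<Delta>"
  using degree_gt_4K[of x0] x0 parts_subset K_nonneg by auto

lemma max_degree_on_X: "max_degree_on V E X = \<Delta>"
  unfolding max_degree_on_def using x0 x0_max finite_parts
  by (intro antisym Max.boundedI Max_ge) auto

definition codeg :: "'a \<Rightarrow> nat" where
  "codeg x = card (N x0 \<inter> N x)"

definition X_good :: "'a set" where
  "X_good = {x \<in> X. (1 - \<eta>) * \<Delta> < codeg x}"

definition X_mid :: "'a set" where
  "X_mid = {x \<in> X. (1 - 2 * \<eta>) * \<Delta> < codeg x \<and> codeg x \<le> (1 - \<eta>) * \<Delta>}"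

definition Y_good :: "'a set" where
  "Y_good = {y \<in> Y. N y \<inter> X_good \<noteq> {}}"

lemma codeg_le_degree: "codeg x \<le> degree V E x"
  unfolding codeg_def degree_eq_card_nbhd using finite_nbhd by (simp add: card_mono)

lemma card_nbhd_inter_le:
  "card (N u \<inter> N w) + codeg u \<le> codeg w + degree V E u"
proof -
  have "card (N u \<inter> N w) \<le> card ((N x0 \<inter> N w) \<union> (N u - N x0))"
    using finite_nbhd by (intro card_mono) auto
  also have "\<dots> \<le> codeg w + card (N u - N x0)"
    unfolding codeg_def by (rule card_Un_le)
  finally show ?thesis
    using card_Int_Diff[OF finite_nbhd, of u "N x0"]
    by (simp add: codeg_def degree_eq_card_nbhd Int_commute)
qed

lemma card_X_mid_le: "card X_mid \<le> 2 * K"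
proof -
  have "card X_mid * (\<Delta> / 2) \<le> card (N x0) * K"
  proof (rule double_counting_card_le[where R = "\<lambda>x y. E x y"])
    show "finite X_mid" using finite_parts by (simp add: X_mid_def)
    show "finite (N x0)" by (rule finite_nbhd)
    fix x assume x: "x \<in> X_mid"
    have "{y \<in> N x0. E x y} = N x0 \<inter> N x" by (auto simp: nbhd_iff)
    moreover have "\<Delta> / 2 \<le> (1 - 2 * \<eta>) * \<Delta>"
      using eps mult_left_le_one_le[of "real \<Delta>" \<epsilon>] by (simp add: field_simps)
    ultimately show "\<Delta> / 2 \<le> card {y \<in> N x0. E x y}"
      using x by (simp add: X_mid_def codeg_def)
  next
    fix y assume "y \<in> N x0"
    then have "E x0 y" by (simp add: nbhd_iff)
    obtain S where S: "S \<subseteq> N y" "card S \<le> K"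
      "\<And>w. w \<in> N y - S \<Longrightarrow> (1 - \<eta>) * \<Delta> < codeg w"
      using exceptional_nbrs[OF \<open>E x0 y\<close>] unfolding codeg_def by blast
    have "{x \<in> X_mid. E x y} \<subseteq> S"
      using S(3) by (force simp: X_mid_def nbhd_iff edge_sym)
    then have "card {x \<in> X_mid. E x y} \<le> card S"
      using S(1) finite_nbhd by (meson card_mono finite_subset)
    then show "card {x \<in> X_mid. E x y} \<le> K" using S(2) by linarith
  qed
  then show ?thesis using Delta_pos by (simp add: degree_eq_card_nbhd field_simps)
qed

lemma card_nbhd_diff_X_good_le:
  assumes y: "y \<in> Y_good"
  shows "card (N y - X_good) \<le> 3 * K"
proof -
  obtain x' where x': "x' \<in> N y" "x' \<in> X_good" using y by (auto simp: Y_good_def)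
  have "E x' y" using x'(1) nbhd_iff edge_sym by blast
  obtain S where S: "S \<subseteq> N y" "card S \<le> K"
    "\<And>w. w \<in> N y - S \<Longrightarrow> (1 - \<eta>) * degree V E x' < card (N x' \<inter> N w)"
    using exceptional_nbrs[OF \<open>E x' y\<close>] by blast
  \<comment> \<open>\<open>z\<close> sees most of \<open>N x'\<close>, which in turn is mostly inside \<open>N x0\<close>\<close>
  have "N y - X_good \<subseteq> S \<union> X_mid"
  proof
    fix z assume z: "z \<in> N y - X_good"
    show "z \<in> S \<union> X_mid"
    proof (rule ccontr)
      assume "z \<notin> S \<union> X_mid"
      then have "(1 - \<eta>) * degree V E x' < card (N x' \<inter> N z)" using S(3) z by blast
      moreover have "card (N x' \<inter> N z) + codeg x' \<le> codeg z + degree V E x'"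
        by (rule card_nbhd_inter_le)
      moreover have "(1 - \<eta>) * \<Delta> < codeg x'" "degree V E x' \<le> \<Delta>" "x' \<in> X"
        using x'(2) x0_max by (auto simp: X_good_def)
      moreover have "z \<in> X" using z y nbhd_Y by (auto simp: Y_good_def)
      moreover have "\<eta> * degree V E x' \<le> \<eta> * \<Delta>"
        using eps \<open>degree V E x' \<le> \<Delta>\<close> by (simp add: mult_left_mono)
      ultimately have "(1 - 2 * \<eta>) * \<Delta> < codeg z"
        by (simp add: algebra_simps)
      then show False using \<open>z \<notin> S \<union> X_mid\<close> z \<open>z \<in> X\<close> by (auto simp: X_mid_def X_good_def)
    qed
  qed
  moreover have "finite (S \<union> X_mid)"
    using S(1) finite_nbhd finite_parts by (auto simp: X_mid_def intro: finite_subset)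
  ultimately have "card (N y - X_good) \<le> card S + card X_mid"
    by (meson card_Un_le card_mono le_trans)
  then show ?thesis using S(2) card_X_mid_le by linarith
qed

lemma Y_good_subset: "Y_good \<subseteq> Y"
  by (auto simp: Y_good_def)

lemma nbhd_X_good:
  assumes "x \<in> X_good"
  shows "N x \<subseteq> Y_good"
proof
  fix y assume "y \<in> N x"
  then have "y \<in> Y" "x \<in> N y"
    using assms nbhd_X nbhd_iff edge_sym by (auto simp: X_good_def)
  then show "y \<in> Y_good" using assms by (auto simp: Y_good_def)
qed

lemma card_nbhd_inter_Y_good:
  assumes x: "x \<in> X" and y: "y \<in> N x" "y \<in> Y_good"
  shows "(1 - \<eta>) * degree V E x < card (N x \<inter> Y_good)"
proof -
  have "E x y" using y(1) nbhd_iff by blast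
  obtain S where S: "S \<subseteq> N y" "card S \<le> K"
    "\<And>w. w \<in> N y - S \<Longrightarrow> (1 - \<eta>) * degree V E x < card (N x \<inter> N w)"
    using exceptional_nbrs[OF \<open>E x y\<close>] by blast
  have "y \<in> V" using y(2) Y_good_subset parts_subset by blast
  have "card (N y) = card (N y \<inter> X_good) + card (N y - X_good)"
    using finite_nbhd by (rule card_Int_Diff)
  then have "real (card S) < card (N y \<inter> X_good)"
    using S(2) card_nbhd_diff_X_good_le[OF y(2)] degree_gt_4K[OF \<open>y \<in> V\<close>]
    unfolding degree_eq_card_nbhd by linarith
  then have "card S < card (N y \<inter> X_good)" by simp
  then obtain z where z: "z \<in> N y \<inter> X_good - S"
    by (rule exists_in_diff_if_card_less[OF finite_subset[OF S(1) finite_nbhd]])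
  have "N x \<inter> N z \<subseteq> N x \<inter> Y_good" using nbhd_X_good z by blast
  then have "real (card (N x \<inter> N z)) \<le> card (N x \<inter> Y_good)"
    using finite_nbhd by (simp add: card_mono)
  moreover have "(1 - \<eta>) * degree V E x < card (N x \<inter> N z)" using S(3) z by blast
  ultimately show ?thesis by linarith
qed

lemma nbhd_subset_Y_good:
  assumes x: "x \<in> X" and y': "y' \<in> N x" "y' \<in> Y_good"
  shows "N x \<subseteq> Y_good"
proof
  fix y assume y: "y \<in> N x"
  show "y \<in> Y_good"
  proof (rule ccontr)
    assume y_bad: "y \<notin> Y_good"
    have "E y x" using y nbhd_iff edge_sym by blast
    obtain S where S: "S \<subseteq> N x" "card S \<le> K"
      "\<And>w. w \<in> N x - S \<Longrightarrow> (1 - \<eta>) * degree V E y < card (N y \<inter> N w)"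
      using exceptional_nbrs[OF \<open>E y x\<close>] by blast
    have three_quarters: "3 / 4 * degree V E v \<le> (1 - \<eta>) * degree V E v" for v
      using eps mult_left_le_one_le[of "real (degree V E v)" \<epsilon>] by (simp add: field_simps)
    have "x \<in> V" "y \<in> V" using x y nbhd_X parts_subset by auto
    then have "real (card S) < card (N x \<inter> Y_good)"
      using S(2) card_nbhd_inter_Y_good[OF x y'] three_quarters[of x] degree_gt_4K[OF \<open>x \<in> V\<close>]
        K_nonneg by linarith
    then have "card S < card (N x \<inter> Y_good)" by simp
    then obtain w where w: "w \<in> N x \<inter> Y_good - S"
      by (rule exists_in_diff_if_card_less[OF finite_subset[OF S(1) finite_nbhd]])
    have "y \<in> Y" using y x nbhd_X by blast
    then have "N y \<inter> X_good = {}" using y_bad by (simp add: Y_good_def)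
    then have "N y \<inter> N w \<subseteq> N w - X_good" by blast
    then have "real (card (N y \<inter> N w)) \<le> card (N w - X_good)"
      using finite_nbhd by (simp add: card_mono)
    moreover have "(1 - \<eta>) * degree V E y < card (N y \<inter> N w)" using S(3) w by blast
    moreover have "card (N w - X_good) \<le> 3 * K" using card_nbhd_diff_X_good_le w by blast
    ultimately show False
      using three_quarters[of y] degree_gt_4K[OF \<open>y \<in> V\<close>] by linarith
  qed
qed

lemma Y_good_eq: "Y_good = Y"
proof -
  let ?P = "Y_good \<union> {x \<in> X. N x \<subseteq> Y_good}"
  have "codeg x0 = \<Delta>"
    by (simp add: codeg_def degree_eq_card_nbhd)
  then have "x0 \<in> X_good"
    using x0 Delta_pos eps by (simp add: X_good_def algebra_simps)
  then have "x0 \<in> ?P" using x0 nbhd_X_good by blast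
  moreover have "q \<in> ?P" if p: "p \<in> ?P" and pq: "E p q" for p q
  proof (cases "p \<in> Y_good")
    case True
    then have "q \<in> X" "p \<in> N q" using pq nbhd_Y nbhd_iff edge_sym Y_good_subset by blast+
    then show ?thesis using nbhd_subset_Y_good True by blast
  next
    case False
    then show ?thesis using p pq nbhd_iff by blast
  qed
  ultimately have "V \<subseteq> ?P"
    using x0 parts_subset by (intro connected_graph_closed_set[OF connected]) auto
  moreover have "X \<inter> Y = {}" using bipartite by (simp add: bipartite_with_def)
  ultimately have "Y \<subseteq> Y_good" using parts_subset by blast
  then show ?thesis using Y_good_subset by blast
qed

lemma card_low_nbrs_le:
  assumes y: "y \<in> Y"
  shows "card {x \<in> low_set V E X \<epsilon>. E x y} \<le> K"
proof -
  obtain x' where x': "x' \<in> N y" "x' \<in> X_good" using y Y_good_eq by (auto simp: Y_good_def)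
  have "E x' y" using x'(1) nbhd_iff edge_sym by blast
  obtain S where S: "S \<subseteq> N y" "card S \<le> K"
    "\<And>w. w \<in> N y - S \<Longrightarrow> (1 - \<eta>) * degree V E x' < card (N x' \<inter> N w)"
    using exceptional_nbrs[OF \<open>E x' y\<close>] by blast
  have "{x \<in> low_set V E X \<epsilon>. E x y} \<subseteq> S"
  proof
    fix x assume x: "x \<in> {x \<in> low_set V E X \<epsilon>. E x y}"
    show "x \<in> S"
    proof (rule ccontr)
      assume "x \<notin> S"
      then have "(1 - \<eta>) * degree V E x' < card (N x' \<inter> N x)"
        using S(3) x nbhd_iff edge_sym by blast
      moreover have "card (N x' \<inter> N x) \<le> degree V E x"
        using finite_nbhd by (simp add: degree_eq_card_nbhd card_mono)
      moreover have "(1 - \<eta>) * codeg x' \<le> (1 - \<eta>) * degree V E x'"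
        using codeg_le_degree eps by (simp add: mult_left_mono)
      moreover have "(1 - \<eta>) * ((1 - \<eta>) * \<Delta>) < (1 - \<eta>) * codeg x'"
        using x'(2) eps by (simp add: X_good_def)
      moreover have "(1 - \<epsilon>) * \<Delta> \<le> (1 - \<eta>) * ((1 - \<eta>) * \<Delta>)"
        using eps by (simp add: algebra_simps power2_eq_square)
      moreover have "degree V E x \<le> (1 - \<epsilon>) * \<Delta>"
        using x by (simp add: low_set_def max_degree_on_X)
      ultimately show False by linarith
    qed
  qed
  then have "card {x \<in> low_set V E X \<epsilon>. E x y} \<le> card S"
    using S(1) finite_nbhd by (meson card_mono finite_subset)
  then show ?thesis using S(2) by linarith
qed

lemma card_low_set_mult_le: "real (card (low_set V E X \<epsilon>)) * min_degree V E \<le> K * card Y"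
proof -
  have "real (card (low_set V E X \<epsilon>)) * min_degree V E \<le> card Y * K"
  proof (rule double_counting_card_le[where R = "\<lambda>x y. E x y"])
    show "finite (low_set V E X \<epsilon>)" "finite Y"
      using finite_parts by (simp_all add: low_set_def)
    fix x assume "x \<in> low_set V E X \<epsilon>"
    then have "x \<in> X" by (simp add: low_set_def)
    then have "{y \<in> Y. E x y} = N x" using nbhd_X nbhd_iff by blast
    moreover have "min_degree V E \<le> degree V E x"
      using \<open>x \<in> X\<close> parts_subset graph by (auto simp: min_degree_def graph_def)
    ultimately show "real (min_degree V E) \<le> card {y \<in> Y. E x y}"
      by (simp add: degree_eq_card_nbhd)
  qed (rule card_low_nbrs_le)
  then show ?thesis by (simp add: mult.commute)
qed

lemma card_low_set_le:
  "card (low_set V E X \<epsilon>) \<le> min_degree_threshold t \<epsilon> / min_degree V E * card Y"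
proof -
  have "K \<le> min_degree_threshold t \<epsilon>" and "0 < min_degree_threshold t \<epsilon>"
    using exceptional_bound_less_min_degree_threshold[OF t_pos eps(1)] K_nonneg by linarith+
  then have "real (card (low_set V E X \<epsilon>)) * min_degree V E \<le> min_degree_threshold t \<epsilon> * card Y"
       and "0 < real (min_degree V E)"
    using card_low_set_mult_le mult_right_mono[of K _ "real (card Y)"] min_degree_large
    by (smt (verit) of_nat_0_le_iff)+
  then show ?thesis by (simp add: pos_le_divide_eq)
qed

end

lemma card_low_set_le:
  assumes G: "graph V E" and conn: "connected_graph V E" and bip: "bipartite_with V E X Y"
    and L: "linked_nbhds V E t" and t: "0 < t" and eps: "0 < \<epsilon>" "\<epsilon> < 1"
    and large: "min_degree_threshold t \<epsilon> \<le> min_degree V E"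
  shows "card (low_set V E X \<epsilon>) \<le> min_degree_threshold t \<epsilon> / min_degree V E * card Y"
proof (cases "X = {}")
  case True
  have "0 \<le> min_degree_threshold t \<epsilon>"
    using exceptional_bound_less_min_degree_threshold[OF t eps(1)]
      exceptional_bound_nonneg[of t "\<epsilon> / 4"] t eps
    by linarith
  with True show ?thesis by (simp add: low_set_def)
next
  case False
  have "finite X" using G bip by (auto simp: graph_def bipartite_with_def intro: finite_subset)
  then have "Max (degree V E ` X) \<in> degree V E ` X" using False by (intro Max_in) auto
  then obtain x0 where x0: "x0 \<in> X" "degree V E x0 = Max (degree V E ` X)" by (metis imageE)
  moreover have "degree V E x \<le> degree V E x0" if "x \<in> X" for x
    using x0(2) \<open>finite X\<close> that by simp
  ultimately interpret biclaw_free_bipartite V E X Y t \<epsilon> x0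
    using assms by unfold_locales
  show ?thesis by (rule card_low_set_le)
qed

theorem mainTheorem11:
  "\<exists>C :: nat \<Rightarrow> real \<Rightarrow> real. \<forall>(t::nat) (eps::real).
     t > 0 \<longrightarrow> 0 < eps \<longrightarrow> eps < 1 \<longrightarrow>
     (\<forall>(V :: nat set) E X Y n.
        graph V E \<longrightarrow> connected_graph V E \<longrightarrow> bipartite_with V E X Y \<longrightarrow>
        card X = n \<longrightarrow> card Y = n \<longrightarrow>
        real (min_degree V E) \<ge> C t eps \<longrightarrow>
        \<not> has_induced_biclaw V E t t \<longrightarrow>
        real (card (low_set V E X eps)) \<le> C t eps / real (min_degree V E) * real n \<and>
        real (card (low_set V E Y eps)) \<le> C t eps / real (min_degree V E) * real n)"
proof (intro exI[of _ min_degree_threshold] allI impI)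
  fix t :: nat and eps :: real and V :: "nat set" and E X Y n
  assume t: "t > 0" and eps: "0 < eps" "eps < 1" and G: "graph V E" and conn: "connected_graph V E"
    and bip: "bipartite_with V E X Y" and n: "card X = n" "card Y = n"
    and large: "min_degree_threshold t eps \<le> real (min_degree V E)"
    and no_biclaw: "\<not> has_induced_biclaw V E t t"
  have L: "linked_nbhds V E t" using linked_nbhds_if_no_induced_biclaw[OF G bip no_biclaw] .
  show "real (card (low_set V E X eps)) \<le> min_degree_threshold t eps / min_degree V E * n \<and>
        real (card (low_set V E Y eps)) \<le> min_degree_threshold t eps / min_degree V E * n"
    using card_low_set_le[OF G conn bip L t eps large]
      card_low_set_le[OF G conn bipartite_with_swap[OF bip] L t eps large]
    unfolding n by blast
qed

end
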